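(* Let $C\subseteq\mathbb{F}_2^n$ be a binary linear code with $\mathbf{1}_n\in C$, whose dual $C^\perp$ has minimum distance $d^\perp$, and let $t$ be a positive integer such that $$d^\perp-t=\#\{u \mid C_u\neq\emptyset,\ 0<u\le n-t\}=1.$$ Then the support design $D_{n/2}$ of $C$ for weight $n/2$ is a $1$-design or a $3$-design; more precisely, the largest integer $s\ge1$ such that $D_{n/2}$ is an $s$-design satisfies $s\in\{1,3\}$.
   Context: $\mathbf{1}_n$ is the all-ones vector; $C^\perp$ is the dual code with respect to the standard inner product; $d^\perp$ is the minimum nonzero weight of $C^\perp$; $C_u=\{c\in C:\mathrm{wt}(c)=u\}$ (Hamming weight). In this situation the nonzero weights of $C$ are exactly $n/2$ and $n$, with $n$ even. An $s$-design on a point set $X$ is a collection of blocks ($k$-subsets of $X$) such that every $s$-subset of $X$ lies in the same number of blocks. The support design $D_{n/2}$ has points $\{1,\dots,n\}$ and blocks the supports $\{i:c_i\neq0\}$ of codewords $c\in C$ of weight $n/2$. *)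

theory Defs
  imports Main "HOL-Library.Z2"
begin

definition vecs :: "nat \<Rightarrow> (nat \<Rightarrow> bit) set" where
  "vecs n = {x. \<forall>i. n \<le> i \<longrightarrow> x i = 0}"

definition supp :: "nat \<Rightarrow> (nat \<Rightarrow> bit) \<Rightarrow> nat set" where
  "supp n x = {i \<in> {0..<n}. x i \<noteq> 0}"

definition wt :: "nat \<Rightarrow> (nat \<Rightarrow> bit) \<Rightarrow> nat" where
  "wt n x = card (supp n x)"

definition ones :: "nat \<Rightarrow> (nat \<Rightarrow> bit)" where
  "ones n = (\<lambda>i. if i < n then 1 else 0)"

definition binary_linear_code :: "nat \<Rightarrow> (nat \<Rightarrow> bit) set \<Rightarrow> bool" where
  "binary_linear_code n C \<longleftrightarrow> C \<subseteq> vecs n \<and> (\<lambda>_. 0) \<in> C \<and>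
     (\<forall>x\<in>C. \<forall>y\<in>C. (\<lambda>i. x i + y i) \<in> C) \<and> (\<forall>a x. x \<in> C \<longrightarrow> (\<lambda>i. a * x i) \<in> C)"

definition inner :: "nat \<Rightarrow> (nat \<Rightarrow> bit) \<Rightarrow> (nat \<Rightarrow> bit) \<Rightarrow> bit" where
  "inner n x y = (\<Sum>i<n. x i * y i)"

definition dual_code :: "nat \<Rightarrow> (nat \<Rightarrow> bit) set \<Rightarrow> (nat \<Rightarrow> bit) set" where
  "dual_code n C = {y \<in> vecs n. \<forall>x\<in>C. inner n x y = 0}"

definition is_min_distance :: "nat \<Rightarrow> (nat \<Rightarrow> bit) set \<Rightarrow> nat \<Rightarrow> bool" where
  "is_min_distance n D d \<longleftrightarrow>
     (\<exists>c\<in>D. c \<noteq> (\<lambda>_. 0) \<and> wt n c = d) \<and> (\<forall>c\<in>D. c \<noteq> (\<lambda>_. 0) \<longrightarrow> d \<le> wt n c)"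

definition code_weight_class :: "nat \<Rightarrow> (nat \<Rightarrow> bit) set \<Rightarrow> nat \<Rightarrow> (nat \<Rightarrow> bit) set" where
  "code_weight_class n C u = {c \<in> C. wt n c = u}"

definition support_design :: "nat \<Rightarrow> (nat \<Rightarrow> bit) set \<Rightarrow> nat \<Rightarrow> nat set set" where
  "support_design n C u = supp n ` code_weight_class n C u"

definition is_design :: "nat set \<Rightarrow> nat \<Rightarrow> nat set set \<Rightarrow> nat \<Rightarrow> bool" where
  "is_design X k B s \<longleftrightarrow> s \<le> k \<and> (\<forall>b\<in>B. b \<subseteq> X \<and> card b = k) \<and>
     (\<exists>lam. \<forall>S. S \<subseteq> X \<and> card S = s \<longrightarrow> card {b \<in> B. S \<subseteq> b} = lam)"

end

theory Submission
  imports Defs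
begin

(* Since the dual distance is t + 1, C is an orthogonal array of strength t: prescribing the
   values of a codeword on s <= t coordinates leaves exactly |C| / 2^s codewords (a character
   sum computation). A codeword vanishing on t coordinates has weight at most n - t, so it is 0
   or has the unique low weight u; hence the complements of the weight-u supports form a
   t-design, and by inclusion-exclusion the number of weight-u supports through a set V depends
   only on |V| when |V| <= t. If u < t, a u-set meeting the support of a dual word of weight
   t + 1 in exactly one point would then be a support, which contradicts orthogonality; so
   t <= u, and adding the all-ones word to a word of weight u gives n = 2u. Now every codeword
   other than 0 and 1 has weight n/2, so for 0 < |S| <= t exactly |C| / 2^|S| - 1 blocks contain
   S and D_{n/2} is a t-design; t is odd because the dual word is orthogonal to 1. If t = 1,
   the dual word of weight 2 forces two coordinates to agree on all of C, so lambda_2 = lambda_1,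
   which is incompatible with a 2-design. If t >= 3, the relations between lambda_1, lambda_2,
   lambda_3 and a putative lambda_4 have no integer solution, so D_{n/2} is not a 4-design. *)

(* Keep + and * on bits as field operations rather than rewriting them to xor and and. *)
declare add_bit_eq_xor [simp del] mult_bit_eq_and [simp del]

section \<open>Binary vectors\<close>

lemma bit_add_self [simp]: "(x::bit) + x = 0"
  by (cases x) simp_all

lemma bit_add_eq_0_iff: "(x::bit) + y = 0 \<longleftrightarrow> x = y"
  by (cases x; cases y) simp_all

lemma of_nat_eq_0_iff_even_bit: "(of_nat k :: bit) = 0 \<longleftrightarrow> even k"
  by (metis bit_2_eq_0 dvd_0_left_iff even_of_nat)

definition vecs_on :: "nat set \<Rightarrow> (nat \<Rightarrow> bit) set" where
  "vecs_on S = {y. \<forall>i. i \<notin> S \<longrightarrow> y i = 0}"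

lemma vecs_eq_vecs_on: "vecs n = vecs_on {0..<n}"
  unfolding vecs_def vecs_on_def by auto

lemma vecs_on_eq_image_Pow: "vecs_on S = (\<lambda>A i. of_bool (i \<in> A)) ` Pow S"
proof
  show "vecs_on S \<subseteq> (\<lambda>A i. of_bool (i \<in> A)) ` Pow S"
  proof
    fix y assume y: "y \<in> vecs_on S"
    have "y = (\<lambda>i. of_bool (i \<in> {i. y i = 1}))"
      by (rule ext) simp
    moreover have "{i. y i = 1} \<in> Pow S"
      using y unfolding vecs_on_def by auto
    ultimately show "y \<in> (\<lambda>A i. of_bool (i \<in> A)) ` Pow S" by blast
  qed
  show "(\<lambda>A i. of_bool (i \<in> A)) ` Pow S \<subseteq> vecs_on S"
    unfolding vecs_on_def by auto
qed

lemma card_vecs_on: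
  assumes "finite S"
  shows "card (vecs_on S) = 2 ^ card S"
proof -
  have "inj (\<lambda>A i. (of_bool (i \<in> A) :: bit))"
    by (rule inj_on_inverseI[where g = "\<lambda>y. {i. y i = 1}"]) simp
  then have "card ((\<lambda>A i. (of_bool (i \<in> A) :: bit)) ` Pow S) = card (Pow S)"
    by (rule card_image[OF inj_on_subset]) simp
  then show ?thesis
    unfolding vecs_on_eq_image_Pow using assms by (simp add: card_Pow)
qed

lemma finite_vecs_on: "finite S \<Longrightarrow> finite (vecs_on S)"
  by (simp add: vecs_on_eq_image_Pow)

lemma finite_vecs [simp]: "finite (vecs n)"
  by (simp add: vecs_eq_vecs_on vecs_on_eq_image_Pow)

lemma supp_subset: "supp n x \<subseteq> {0..<n}"
  unfolding supp_def by auto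

lemma finite_supp [simp]: "finite (supp n x)"
  using finite_subset[OF supp_subset] by blast

lemma wt_le: "wt n x \<le> n"
proof -
  have "card (supp n x) \<le> card {0..<n}"
    by (rule card_mono[OF finite_atLeastLessThan supp_subset])
  then show ?thesis unfolding wt_def by simp
qed

lemma inj_on_supp: "inj_on (supp n) (vecs n)"
proof (rule inj_onI, rule ext)
  fix x y i assume x: "x \<in> vecs n" and y: "y \<in> vecs n" and eq: "supp n x = supp n y"
  show "x i = y i"
  proof (cases "i < n")
    case True
    from eq have "i \<in> supp n x \<longleftrightarrow> i \<in> supp n y" by simp
    then show ?thesis using True unfolding supp_def by (cases "x i"; cases "y i") simp_all
  next
    case False
    then show ?thesis using x y unfolding vecs_def by simp
  qed
qed

lemma wt_eq_0_iff: "x \<in> vecs n \<Longrightarrow> wt n x = 0 \<longleftrightarrow> x = (\<lambda>_. 0)"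
  unfolding wt_def supp_def vecs_def by (auto simp: fun_eq_iff) (meson not_le)

lemma supp_ones: "supp n (ones n) = {0..<n}"
  unfolding supp_def ones_def by auto

lemma wt_ones: "wt n (ones n) = n"
  unfolding wt_def supp_ones by simp

lemma wt_add_ones: "wt n (\<lambda>i. x i + ones n i) = n - wt n x"
proof -
  have "supp n (\<lambda>i. x i + ones n i) = {0..<n} - supp n x"
    unfolding supp_def ones_def by auto
  then show ?thesis
    unfolding wt_def using supp_subset[of n x] by (simp add: card_Diff_subset)
qed
lemma all_eq_0_iff_disjoint_supp: "T \<subseteq> {0..<n} \<Longrightarrow> (\<forall>i\<in>T. c i = 0) \<longleftrightarrow> T \<inter> supp n c = {}"
  unfolding supp_def disjoint_iff by auto

lemma inner_eq_of_nat_card: "inner n x y = of_nat (card (supp n x \<inter> supp n y))"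
proof -
  have "inner n x y = (\<Sum>i<n. of_bool (i \<in> supp n x \<inter> supp n y))"
    unfolding inner_def supp_def by (rule sum.cong) (auto simp: mult_bit_eq_and)
  also have "\<dots> = of_nat (card ({..<n} \<inter> {i. i \<in> supp n x \<inter> supp n y}))"
    by (simp add: sum_of_bool_eq)
  also have "{..<n} \<inter> {i. i \<in> supp n x \<inter> supp n y} = supp n x \<inter> supp n y"
    unfolding supp_def by auto
  finally show ?thesis .
qed

section \<open>Character sums over linear codes\<close>

lemma binary_linear_code_subset: "binary_linear_code n C \<Longrightarrow> C \<subseteq> vecs n"
  and binary_linear_code_zero: "binary_linear_code n C \<Longrightarrow> (\<lambda>_. 0) \<in> C"
  and binary_linear_code_add: "binary_linear_code n C \<Longrightarrow> x \<in> C \<Longrightarrow> y \<in> C \<Longrightarrow> (\<lambda>i. x i + y i) \<in> C"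
  unfolding binary_linear_code_def by auto

lemma binary_linear_code_finite: "binary_linear_code n C \<Longrightarrow> finite C"
  using finite_subset[OF binary_linear_code_subset finite_vecs] .

lemma inner_add_left: "inner n (\<lambda>i. x i + z i) y = inner n x y + inner n z y"
  and inner_add_right: "inner n x (\<lambda>i. y i + z i) = inner n x y + inner n x z"
  unfolding inner_def by (simp_all only: distrib_right distrib_left sum.distrib)

lemma sum_translate:
  assumes closed: "\<And>c. c \<in> A \<Longrightarrow> (\<lambda>i. c i + x i) \<in> A"
  shows "(\<Sum>c\<in>A. f (\<lambda>i. c i + (x i :: bit))) = (\<Sum>c\<in>A. (f c :: 'b::comm_monoid_add))"
proof -
  let ?h = "\<lambda>c i. c i + x i"
  have involution: "?h (?h c) = c" for c
    by (simp add: add.assoc)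
  have "bij_betw ?h A A"
    by (rule bij_betw_byWitness[where f' = ?h]) (use closed involution in auto)
  then show ?thesis
    by (rule sum.reindex_bij_betw)
qed

definition bit_sign :: "bit \<Rightarrow> int" where
  "bit_sign b = (if b = 0 then 1 else -1)"

lemma bit_sign_simps [simp]: "bit_sign 0 = 1" "bit_sign 1 = -1"
  by (simp_all add: bit_sign_def)

lemma bit_sign_add: "bit_sign (a + b) = bit_sign a * bit_sign b"
  by (cases a; cases b) simp_all

lemma sum_bit_sign_inner_code:
  assumes C: "binary_linear_code n C" and y: "y \<in> vecs n" "y \<notin> dual_code n C"
  shows "(\<Sum>c\<in>C. bit_sign (inner n c y)) = 0"
proof -
  obtain x where x: "x \<in> C" "inner n x y = 1"
    using y unfolding dual_code_def by auto
  have "(\<Sum>c\<in>C. bit_sign (inner n c y)) = (\<Sum>c\<in>C. bit_sign (inner n (\<lambda>i. c i + x i) y))"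
    using sum_translate[of C x "\<lambda>c. bit_sign (inner n c y)"] binary_linear_code_add[OF C _ x(1)]
    by simp
  also have "\<dots> = - (\<Sum>c\<in>C. bit_sign (inner n c y))"
    by (simp add: inner_add_left bit_sign_add x(2) sum_negf)
  finally show ?thesis by simp
qed

lemma sum_bit_sign_inner_vecs_on:
  assumes S: "S \<subseteq> {0..<n}"
  shows "(\<Sum>y\<in>vecs_on S. bit_sign (inner n x y)) = (if \<forall>i\<in>S. x i = 0 then 2 ^ card S else 0)"
proof (cases "\<forall>i\<in>S. x i = 0")
  case True
  have "inner n x y = 0" if "y \<in> vecs_on S" for y
    unfolding inner_def
    by (rule sum.neutral) (use True that in \<open>auto simp: vecs_on_def\<close>)
  then show ?thesis
    using True card_vecs_on[OF finite_subset[OF S finite_atLeastLessThan]] by simp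
next
  case False
  then obtain a where a: "a \<in> S" "x a = 1" by auto
  define e where "e = (\<lambda>i. of_bool (i = a) :: bit)"
  have "inner n x e = (\<Sum>i<n. if i = a then x a else 0)"
    unfolding inner_def e_def by (rule sum.cong) auto
  then have inner_e: "inner n x e = 1"
    using a S by auto
  have "(\<Sum>y\<in>vecs_on S. bit_sign (inner n x y)) = (\<Sum>y\<in>vecs_on S. bit_sign (inner n x (\<lambda>i. y i + e i)))"
  proof (rule sum_translate[symmetric])
    show "(\<lambda>i. y i + e i) \<in> vecs_on S" if "y \<in> vecs_on S" for y
      using that a(1) by (auto simp: vecs_on_def e_def)
  qed
  also have "\<dots> = - (\<Sum>y\<in>vecs_on S. bit_sign (inner n x y))"
    by (simp add: inner_add_right bit_sign_add inner_e sum_negf)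
  finally show ?thesis using False by simp
qed

(* Double counting of the sum of (-1)^((c + p).y) over c in C and y supported on S: summing over y
   first detects agreement with p on S, summing over c first kills every y except 0, because no
   nonzero vector supported on S lies in the dual code. *)
lemma card_agreeing_codewords:
  assumes C: "binary_linear_code n C" and d: "is_min_distance n (dual_code n C) d"
    and S: "S \<subseteq> {0..<n}" "card S < d"
  shows "card {c\<in>C. \<forall>i\<in>S. c i = p i} * 2 ^ card S = card C"
proof -
  have finC: "finite C" using C by (rule binary_linear_code_finite)
  have finS: "finite S" using S(1) finite_subset by blast
  have zero: "(\<lambda>_. 0) \<in> vecs_on S" by (simp add: vecs_on_def)
  have not_dual: "y \<notin> dual_code n C" if y: "y \<in> vecs_on S - {\<lambda>_. 0}" for y
  proof
    assume "y \<in> dual_code n C"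
    moreover have "supp n y \<subseteq> S" using y unfolding vecs_on_def supp_def by auto
    then have "wt n y < d" unfolding wt_def using card_mono[OF finS] S(2) by (meson le_less_trans)
    ultimately show False using y d unfolding is_min_distance_def by (auto simp: not_le)
  qed
  have vecs_n: "y \<in> vecs n" if "y \<in> vecs_on S" for y
    using that S(1) unfolding vecs_on_def vecs_def by auto
  have "int (card {c\<in>C. \<forall>i\<in>S. c i = p i}) * 2 ^ card S
      = (\<Sum>c\<in>C. if \<forall>i\<in>S. c i + p i = 0 then 2 ^ card S else 0)"
    using finC by (simp add: bit_add_eq_0_iff sum.If_cases Int_def)
  also have "\<dots> = (\<Sum>c\<in>C. \<Sum>y\<in>vecs_on S. bit_sign (inner n (\<lambda>i. c i + p i) y))"
    using sum_bit_sign_inner_vecs_on[OF S(1)] by simp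
  also have "\<dots> = (\<Sum>y\<in>vecs_on S. bit_sign (inner n p y) * (\<Sum>c\<in>C. bit_sign (inner n c y)))"
    by (subst sum.swap) (simp add: inner_add_left bit_sign_add sum_distrib_left mult.commute)
  also have "\<dots> = bit_sign (inner n p (\<lambda>_. 0)) * (\<Sum>c\<in>C. bit_sign (inner n c (\<lambda>_. 0)))"
    using finS zero not_dual vecs_n sum_bit_sign_inner_code[OF C]
    by (subst sum.remove[OF _ zero]) (simp_all add: finite_vecs_on)
  also have "\<dots> = int (card C)"
    by (simp add: inner_def)
  finally have "int (card {c\<in>C. \<forall>i\<in>S. c i = p i} * 2 ^ card S) = int (card C)"
    by simp
  then show ?thesis by (simp only: of_nat_eq_iff)
qed

section \<open>Block designs\<close>

lemma sum_card_blocks_containing_insert: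
  assumes X: "finite X" and B: "\<forall>b\<in>B. b \<subseteq> X \<and> card b = k" and T: "T \<subseteq> X"
  shows "(\<Sum>x\<in>X - T. card {b\<in>B. insert x T \<subseteq> b}) = card {b\<in>B. T \<subseteq> b} * (k - card T)"
proof -
  have finB: "finite B"
    using X B by (meson PowI finite_Pow_iff finite_subset subsetI)
  have "(\<Sum>x\<in>X - T. card {b\<in>B. insert x T \<subseteq> b}) = (\<Sum>b\<in>B. card {x\<in>X - T. insert x T \<subseteq> b})"
    using sum.swap_restrict[of "X - T" B "\<lambda>_ _. 1::nat" "\<lambda>x b. insert x T \<subseteq> b"] X finB by simp
  also have "\<dots> = (\<Sum>b\<in>B. if T \<subseteq> b then k - card T else 0)"
  proof (rule sum.cong)
    fix b assume b: "b \<in> B"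
    show "card {x\<in>X - T. insert x T \<subseteq> b} = (if T \<subseteq> b then k - card T else 0)"
    proof (cases "T \<subseteq> b")
      case True
      then have "{x\<in>X - T. insert x T \<subseteq> b} = b - T" using b B by auto
      moreover have "finite b" using b B X finite_subset by blast
      ultimately show ?thesis
        using True b B by (simp add: card_Diff_subset finite_subset)
    qed auto
  qed simp
  also have "\<dots> = card {b\<in>B. T \<subseteq> b} * (k - card T)"
    using finB by (simp add: sum.If_cases Int_def)
  finally show ?thesis by simp
qed

lemma card_blocks_containing_derived:
  assumes X: "finite X" and B: "\<forall>b\<in>B. b \<subseteq> X \<and> card b = k" and T: "T \<subseteq> X"
    and L: "\<And>x. x \<in> X - T \<Longrightarrow> card {b\<in>B. insert x T \<subseteq> b} = L"
  shows "card {b\<in>B. T \<subseteq> b} * (k - card T) = (card X - card T) * L"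
proof -
  have "card {b\<in>B. T \<subseteq> b} * (k - card T) = (\<Sum>x\<in>X - T. L)"
    using sum_card_blocks_containing_insert[OF X B T] L by simp
  also have "\<dots> = (card X - card T) * L"
    using X T by (simp add: card_Diff_subset finite_subset)
  finally show ?thesis .
qed

lemma is_design_Suc_imp:
  assumes D: "is_design X k B (Suc s)" and X: "finite X"
  shows "is_design X k B s"
proof -
  have sk: "Suc s \<le> k" and B: "\<forall>b\<in>B. b \<subseteq> X \<and> card b = k"
    using D unfolding is_design_def by auto
  obtain L where L: "\<And>S. S \<subseteq> X \<Longrightarrow> card S = Suc s \<Longrightarrow> card {b\<in>B. S \<subseteq> b} = L"
    using D unfolding is_design_def by auto
  have "card {b\<in>B. T \<subseteq> b} = (card X - s) * L div (k - s)" if T: "T \<subseteq> X" "card T = s" for T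
  proof -
    have "card {b\<in>B. insert x T \<subseteq> b} = L" if "x \<in> X - T" for x
      using that T X by (intro L) (auto simp: finite_subset)
    then have "card {b\<in>B. T \<subseteq> b} * (k - s) = (card X - s) * L"
      using card_blocks_containing_derived[OF X B T(1)] T(2) by simp
    then show ?thesis
      using sk by (metis nonzero_mult_div_cancel_right zero_less_diff less_eq_Suc_le not_gr0)
  qed
  then show ?thesis
    using sk B unfolding is_design_def by auto
qed

lemma is_design_mono:
  assumes "is_design X k B s" "finite X" "s' \<le> s"
  shows "is_design X k B s'"
  using assms
proof (induction s)
  case (Suc s)
  then show ?case
    by (cases "s' = Suc s") (auto dest: is_design_Suc_imp)
qed simp

lemma is_design_card_blocks_containing_eq:
  assumes D: "is_design X k B s" and X: "finite X"
    and S: "S \<subseteq> X" "S' \<subseteq> X" "card S = card S'" "card S \<le> s"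
  shows "card {b\<in>B. S \<subseteq> b} = card {b\<in>B. S' \<subseteq> b}"
proof -
  have "is_design X k B (card S)"
    using is_design_mono[OF D X S(4)] .
  then show ?thesis
    using S unfolding is_design_def by metis
qed

lemma sum_neg_one_power_card_Pow:
  assumes "finite A"
  shows "(\<Sum>U\<in>Pow A. (-1::int) ^ card U) = of_bool (A = {})"
proof -
  have "(\<Sum>U\<in>Pow A. (-1::int) ^ card U) = (\<Prod>x\<in>A. 1 - 1)"
    using prod_diff_conv_sum[OF assms, of "\<lambda>_. 1" "\<lambda>_. 1", symmetric] by simp
  also have "\<dots> = of_bool (A = {})"
    using assms by (simp add: power_0_left)
  finally show ?thesis .
qed

lemma int_card_blocks_containing:
  assumes B: "finite B" and V: "finite V"
  shows "int (card {b\<in>B. V \<subseteq> b}) = (\<Sum>U\<in>Pow V. (-1) ^ card U * int (card {b\<in>B. U \<inter> b = {}}))"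
proof -
  have "(\<Sum>U\<in>Pow V. (-1) ^ card U * int (card {b\<in>B. U \<inter> b = {}}))
      = (\<Sum>U\<in>Pow V. \<Sum>b\<in>B. if U \<inter> b = {} then (-1) ^ card U else 0)"
    using B by (simp add: sum.If_cases Int_def mult.commute)
  also have "\<dots> = (\<Sum>b\<in>B. \<Sum>U\<in>Pow (V - b). (-1) ^ card U)"
  proof (subst sum.swap, rule sum.cong)
    fix b
    have "{U\<in>Pow V. U \<inter> b = {}} = Pow (V - b)" by auto
    then show "(\<Sum>U\<in>Pow V. if U \<inter> b = {} then (-1) ^ card U else 0) = (\<Sum>U\<in>Pow (V - b). (-1::int) ^ card U)"
      using V by (simp add: sum.inter_filter[symmetric])
  qed simp
  also have "\<dots> = int (card {b\<in>B. V \<subseteq> b})"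
    using B V by (simp add: sum_neg_one_power_card_Pow of_bool_def sum.If_cases Int_def)
  finally show ?thesis ..
qed

lemma card_blocks_disjoint_eq_complement:
  assumes B: "B \<subseteq> Pow X" and U: "U \<subseteq> X"
  shows "card {b\<in>(\<lambda>b. X - b) ` B. U \<subseteq> b} = card {b\<in>B. U \<inter> b = {}}"
proof -
  have "{b\<in>(\<lambda>b. X - b) ` B. U \<subseteq> b} = (\<lambda>b. X - b) ` {b\<in>B. U \<inter> b = {}}"
    using U by auto
  moreover have "inj_on (\<lambda>b. X - b) B"
  proof (rule inj_onI)
    fix b b' assume "b \<in> B" "b' \<in> B" "X - b = X - b'"
    then have "X - (X - b) = X - (X - b')" by simp
    then show "b = b'"
      using \<open>b \<in> B\<close> \<open>b' \<in> B\<close> B by (auto simp: Diff_Diff_Int Int_absorb1)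
  qed
  ultimately show ?thesis
    by (simp add: card_image inj_on_subset)
qed

lemma complement_design_card_blocks_containing_eq:
  assumes X: "finite X" and B: "B \<subseteq> Pow X" and D: "is_design X k ((\<lambda>b. X - b) ` B) s"
    and V: "V \<subseteq> X" "V' \<subseteq> X" "card V = card V'" "card V \<le> s"
  shows "card {b\<in>B. V \<subseteq> b} = card {b\<in>B. V' \<subseteq> b}"
proof -
  have finB: "finite B" using B X by (meson finite_Pow_iff finite_subset)
  have finV: "finite V" "finite V'" using V X finite_subset by auto
  have disjoint_eq: "card {b\<in>B. U \<inter> b = {}} = card {b\<in>B. U' \<inter> b = {}}"
    if "U \<subseteq> X" "U' \<subseteq> X" "card U = card U'" "card U \<le> s" for U U'
    using is_design_card_blocks_containing_eq[OF D X that]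
      card_blocks_disjoint_eq_complement[OF B that(1)] card_blocks_disjoint_eq_complement[OF B that(2)]
    by simp
  obtain h where h: "bij_betw h V V'"
    using finite_same_card_bij[OF finV V(3)] by blast
  have "int (card {b\<in>B. V' \<subseteq> b}) = (\<Sum>U\<in>Pow V'. (-1) ^ card U * int (card {b\<in>B. U \<inter> b = {}}))"
    by (rule int_card_blocks_containing[OF finB finV(2)])
  also have "\<dots> = (\<Sum>U\<in>Pow V. (-1) ^ card (h ` U) * int (card {b\<in>B. h ` U \<inter> b = {}}))"
    by (rule sum.reindex_bij_betw[OF bij_betw_Pow[OF h], symmetric])
  also have "\<dots> = (\<Sum>U\<in>Pow V. (-1) ^ card U * int (card {b\<in>B. U \<inter> b = {}}))"
  proof (rule sum.cong)
    fix U assume U: "U \<in> Pow V"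
    have "card (h ` U) = card U"
      using U bij_betw_imp_inj_on[OF h] by (meson PowD card_image inj_on_subset)
    moreover have "h ` U \<subseteq> X"
      using U h V(2) by (metis PowD bij_betw_imp_surj_on image_mono order_trans)
    moreover have "card U \<le> s"
      using U finV V(4) by (meson PowD card_mono le_trans)
    ultimately show "(-1) ^ card (h ` U) * int (card {b\<in>B. h ` U \<inter> b = {}})
        = (-1) ^ card U * int (card {b\<in>B. U \<inter> b = {}})"
      using disjoint_eq[of "h ` U" U] U V(1) by auto
  qed simp
  also have "\<dots> = int (card {b\<in>B. V \<subseteq> b})"
    by (rule int_card_blocks_containing[OF finB finV(1), symmetric])
  finally show ?thesis by simp
qed

section \<open>Codes with a single low weight\<close>

lemma eq_div_power_minus_one: "(x + 1) * 2 ^ s = (c::nat) \<Longrightarrow> x = c div 2 ^ s - 1"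
  by (metis add_diff_cancel_right' nonzero_mult_div_cancel_right power_not_zero zero_neq_numeral)

(* The relations lambda_s (k - s) = (v - s) lambda_(s+1) for s = 1, 3 in a 4-design with v = 2u
   points, blocks of size k = u and lambda_s = 8m / 2^s - 1 for s <= 3. *)
lemma four_design_equations_unsolvable:
  fixes u m L :: nat
  assumes u: "4 \<le> u" and m: "1 \<le> m"
    and at_point: "(4 * m - 1) * (u - 1) = (2 * u - 1) * (2 * m - 1)"
    and at_triple: "(m - 1) * (u - 3) = (2 * u - 3) * L"
  shows False
proof -
  have "(4 * int m - 1) * (int u - 1) = (2 * int u - 1) * (2 * int m - 1)"
    using arg_cong[OF at_point, of int] u m by (simp add: of_nat_diff)
  then have u_eq: "int u = 2 * int m"
    by (simp add: algebra_simps)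
  have "(int m - 1) * (int u - 3) = (2 * int u - 3) * int L"
    using arg_cong[OF at_triple, of int] u m by (simp add: of_nat_diff)
  then have "(4 * int m - 3) * (8 * int L - 4 * int m + 7) = 3"
    unfolding u_eq by algebra
  then have "4 * int m - 3 \<le> 3"
    by (metis dvd_triv_left zdvd_imp_le zero_less_numeral)
  then show False
    using u u_eq by linarith
qed

locale code_with_one_low_weight =
  fixes n t u :: nat and C :: "(nat \<Rightarrow> bit) set"
  assumes linear_code: "binary_linear_code n C"
    and ones_in_code: "ones n \<in> C"
    and dual_distance: "is_min_distance n (dual_code n C) (t + 1)"
    and t_pos: "0 < t"
    and low_weights: "{w. code_weight_class n C w \<noteq> {} \<and> 0 < w \<and> int w \<le> int n - int t} = {u}"
begin

abbreviation blocks :: "nat set set" where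
  "blocks \<equiv> support_design n C u"

lemma code_subset_vecs: "C \<subseteq> vecs n"
  using linear_code by (rule binary_linear_code_subset)

lemma finite_code: "finite C"
  using linear_code by (rule binary_linear_code_finite)

lemma u_pos: "0 < u" and u_add_t_le: "u + t \<le> n" and weight_u_codeword: "\<exists>c\<in>C. wt n c = u"
  using low_weights unfolding code_weight_class_def by (auto simp: set_eq_iff)

lemma low_wt_eq_u:
  assumes "c \<in> C" "c \<noteq> (\<lambda>_. 0)" "wt n c + t \<le> n"
  shows "wt n c = u"
proof -
  have "wt n c \<noteq> 0"
    using assms(1,2) code_subset_vecs wt_eq_0_iff by blast
  then have "wt n c \<in> {w. code_weight_class n C w \<noteq> {} \<and> 0 < w \<and> int w \<le> int n - int t}"
    using assms unfolding code_weight_class_def by auto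
  then show ?thesis
    using low_weights by simp
qed

lemma card_agreeing:
  assumes "S \<subseteq> {0..<n}" "card S \<le> t"
  shows "card {c\<in>C. \<forall>i\<in>S. c i = p i} * 2 ^ card S = card C"
  using card_agreeing_codewords[OF linear_code dual_distance] assms by simp

lemma obtain_dual_word:
  obtains y where "y \<in> dual_code n C" "wt n y = t + 1"
  using dual_distance unfolding is_min_distance_def by auto

lemma odd_t: "odd t"
proof -
  obtain y where y: "y \<in> dual_code n C" "wt n y = t + 1"
    by (rule obtain_dual_word)
  then have "inner n (ones n) y = 0"
    using ones_in_code unfolding dual_code_def by auto
  then have "even (card (supp n y))"
    using supp_subset[of n y]
    by (simp add: inner_eq_of_nat_card supp_ones of_nat_eq_0_iff_even_bit Int_absorb1)
  then show ?thesis
    using y(2) unfolding wt_def by simp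
qed

lemma blocks_subset: "b \<in> blocks \<Longrightarrow> b \<subseteq> {0..<n} \<and> card b = u"
  unfolding support_design_def code_weight_class_def wt_def using supp_subset by auto

lemma finite_blocks: "finite blocks"
  unfolding support_design_def code_weight_class_def using finite_code by simp

lemma blocks_subset_Pow: "blocks \<subseteq> Pow {0..<n}"
  using blocks_subset by auto

lemma supp_in_blocks: "c \<in> C \<Longrightarrow> wt n c = u \<Longrightarrow> supp n c \<in> blocks"
  unfolding support_design_def code_weight_class_def by auto

lemma blocksE:
  assumes "b \<in> blocks"
  obtains c where "c \<in> C" "wt n c = u" "b = supp n c"
  using assms unfolding support_design_def code_weight_class_def by auto

lemma card_blocks_containing_neq_0:
  assumes "c \<in> C" "wt n c = u" "S \<subseteq> supp n c"
  shows "card {b\<in>blocks. S \<subseteq> b} \<noteq> 0"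
  using supp_in_blocks[OF assms(1,2)] assms(3) finite_blocks by (auto simp: card_eq_0_iff)

lemma card_blocks: "card {b\<in>blocks. P b} = card {c\<in>C. wt n c = u \<and> P (supp n c)}"
proof -
  have "{b\<in>blocks. P b} = supp n ` {c\<in>C. wt n c = u \<and> P (supp n c)}"
    unfolding support_design_def code_weight_class_def by auto
  moreover have "inj_on (supp n) {c\<in>C. wt n c = u \<and> P (supp n c)}"
    by (rule inj_on_subset[OF inj_on_supp]) (use code_subset_vecs in auto)
  ultimately show ?thesis
    by (simp add: card_image)
qed

lemma card_blocks_disjoint:
  assumes T: "T \<subseteq> {0..<n}" "card T = t"
  shows "(card {b\<in>blocks. T \<inter> b = {}} + 1) * 2 ^ t = card C"
proof -
  let ?G = "{c\<in>C. wt n c = u \<and> T \<inter> supp n c = {}}"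
  have "{c\<in>C. \<forall>i\<in>T. c i = 0} = insert (\<lambda>_. 0) ?G"
  proof (intro set_eqI iffI)
    fix c assume c: "c \<in> {c\<in>C. \<forall>i\<in>T. c i = 0}"
    then have disjoint: "T \<inter> supp n c = {}"
      using all_eq_0_iff_disjoint_supp[OF T(1)] by blast
    then have "card (supp n c) \<le> card ({0..<n} - T)"
      using supp_subset by (intro card_mono) auto
    moreover have "t \<le> n"
      using card_mono[OF finite_atLeastLessThan T(1)] T(2) by simp
    ultimately have "wt n c + t \<le> n"
      using T unfolding wt_def by (simp add: card_Diff_subset finite_subset)
    then show "c \<in> insert (\<lambda>_. 0) ?G"
      using c disjoint low_wt_eq_u by auto
  next
    fix c assume "c \<in> insert (\<lambda>_. 0) ?G"
    then show "c \<in> {c\<in>C. \<forall>i\<in>T. c i = 0}"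
      using binary_linear_code_zero[OF linear_code] all_eq_0_iff_disjoint_supp[OF T(1)] by auto
  qed
  moreover have "(\<lambda>_. 0) \<notin> ?G"
    using u_pos by (auto simp: wt_def supp_def)
  ultimately have "card {c\<in>C. \<forall>i\<in>T. c i = 0} = card {b\<in>blocks. T \<inter> b = {}} + 1"
    using finite_code by (simp add: card_blocks)
  then show ?thesis
    using card_agreeing[of T "\<lambda>_. 0"] T by simp
qed

lemma complement_blocks_is_design: "is_design {0..<n} (n - u) ((\<lambda>b. {0..<n} - b) ` blocks) t"
  unfolding is_design_def
proof (intro conjI exI allI impI ballI)
  show "t \<le> n - u"
    using u_add_t_le by simp
  fix b assume "b \<in> (\<lambda>b. {0..<n} - b) ` blocks"
  then obtain b0 where "b0 \<in> blocks" "b = {0..<n} - b0" by blast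
  moreover have "finite b0"
    using blocks_subset[OF \<open>b0 \<in> blocks\<close>] finite_subset by blast
  ultimately show "b \<subseteq> {0..<n}" "card b = n - u"
    using blocks_subset[of b0] by (auto simp: card_Diff_subset)
next
  fix T assume T: "T \<subseteq> {0..<n} \<and> card T = t"
  have "card {b\<in>(\<lambda>b. {0..<n} - b) ` blocks. T \<subseteq> b} = card {b\<in>blocks. T \<inter> b = {}}"
    using card_blocks_disjoint_eq_complement[OF blocks_subset_Pow] T by blast
  also have "\<dots> = card C div 2 ^ t - 1"
    using card_blocks_disjoint[of T] T by (intro eq_div_power_minus_one) simp
  finally show "card {b\<in>(\<lambda>b. {0..<n} - b) ` blocks. T \<subseteq> b} = card C div 2 ^ t - 1" .
qed

lemma card_blocks_containing_eq:
  assumes "V \<subseteq> {0..<n}" "V' \<subseteq> {0..<n}" "card V = card V'" "card V \<le> t"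
  shows "card {b\<in>blocks. V \<subseteq> b} = card {b\<in>blocks. V' \<subseteq> b}"
  by (rule complement_design_card_blocks_containing_eq[OF finite_atLeastLessThan blocks_subset_Pow
        complement_blocks_is_design assms])

lemma t_le_u: "t \<le> u"
proof (rule ccontr)
  assume "\<not> t \<le> u"
  obtain c0 where c0: "c0 \<in> C" "wt n c0 = u"
    using weight_u_codeword by blast
  obtain y where y: "y \<in> dual_code n C" "wt n y = t + 1"
    by (rule obtain_dual_word)
  have "card ({0..<n} - supp n y) = n - (t + 1)"
    using y(2) supp_subset unfolding wt_def by (simp add: card_Diff_subset)
  moreover have "u - 1 \<le> n - (t + 1)"
    using u_add_t_le u_pos by simp
  ultimately obtain W where W: "W \<subseteq> {0..<n} - supp n y" "card W = u - 1"
    using obtain_subset_with_card_n[of "u - 1" "{0..<n} - supp n y"] by auto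
  have "supp n y \<noteq> {}"
    using y(2) unfolding wt_def by auto
  then obtain a where a: "a \<in> supp n y" by blast
  define V where "V = insert a W"
  have "finite W" "a \<notin> W"
    using W(1) a finite_subset by auto
  then have V: "V \<subseteq> {0..<n}" "card V = u"
    unfolding V_def using W a supp_subset[of n y] u_pos by auto
  have "card {b\<in>blocks. supp n c0 \<subseteq> b} = card {b\<in>blocks. V \<subseteq> b}"
    using card_blocks_containing_eq[of "supp n c0" V] V c0(2) supp_subset \<open>\<not> t \<le> u\<close>
    unfolding wt_def by simp
  then have "{b\<in>blocks. V \<subseteq> b} \<noteq> {}"
    using card_blocks_containing_neq_0[OF c0 order_refl] by (metis card.empty)
  then obtain b where b: "b \<in> blocks" "V \<subseteq> b"
    by blast
  obtain c where c: "c \<in> C" "wt n c = u" "b = supp n c"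
    using b(1) by (rule blocksE)
  then have "supp n c = V"
    using b(2) V by (metis card_subset_eq finite_supp wt_def)
  then have "supp n c \<inter> supp n y = {a}"
    using W a unfolding V_def by auto
  then have "inner n c y = 1"
    by (simp add: inner_eq_of_nat_card)
  moreover have "inner n c y = 0"
    using y(1) c(1) unfolding dual_code_def by auto
  ultimately show False by simp
qed

lemma wt_add_ones_eq_u:
  assumes "c \<in> C" "c \<noteq> ones n" "t \<le> wt n c"
  shows "wt n (\<lambda>i. c i + ones n i) = u"
proof (rule low_wt_eq_u)
  show "(\<lambda>i. c i + ones n i) \<in> C"
    using binary_linear_code_add[OF linear_code assms(1) ones_in_code] .
  show "(\<lambda>i. c i + ones n i) \<noteq> (\<lambda>_. 0)"
  proof
    assume "(\<lambda>i. c i + ones n i) = (\<lambda>_. 0)"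
    then have "c = ones n"
      by (simp add: fun_eq_iff bit_add_eq_0_iff)
    then show False using assms(2) by simp
  qed
  show "wt n (\<lambda>i. c i + ones n i) + t \<le> n"
    using assms(3) wt_le[of n c] by (simp add: wt_add_ones)
qed

lemma n_eq_2u: "n = 2 * u"
proof -
  obtain c where c: "c \<in> C" "wt n c = u"
    using weight_u_codeword by blast
  moreover have "c \<noteq> ones n"
    using c(2) u_add_t_le t_pos wt_ones by auto
  ultimately have "n - u = u"
    using wt_add_ones_eq_u[of c] t_le_u by (simp add: wt_add_ones)
  then show ?thesis
    using u_add_t_le by simp
qed

lemma wt_eq_u_if_nontrivial:
  assumes "c \<in> C" "c \<noteq> (\<lambda>_. 0)" "c \<noteq> ones n"
  shows "wt n c = u"
proof (cases "wt n c + t \<le> n")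
  case True
  then show ?thesis using low_wt_eq_u assms by blast
next
  case False
  then have "n - wt n c = u"
    using wt_add_ones_eq_u[OF assms(1,3)] n_eq_2u t_le_u by (simp add: wt_add_ones)
  then show ?thesis
    using n_eq_2u wt_le[of n c] by simp
qed

lemma card_blocks_containing_add_one:
  assumes S: "S \<subseteq> {0..<n}" "S \<noteq> {}"
  shows "card {b\<in>blocks. S \<subseteq> b} + 1 = card {c\<in>C. \<forall>i\<in>S. c i = 1}"
proof -
  let ?G = "{c\<in>C. wt n c = u \<and> S \<subseteq> supp n c}"
  have "{c\<in>C. \<forall>i\<in>S. c i = 1} = insert (ones n) ?G"
  proof (intro set_eqI iffI)
    fix c assume c: "c \<in> {c\<in>C. \<forall>i\<in>S. c i = 1}"
    then have "S \<subseteq> supp n c" "c \<noteq> (\<lambda>_. 0)"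
      using S unfolding supp_def by auto
    then show "c \<in> insert (ones n) ?G"
      using c wt_eq_u_if_nontrivial by auto
  next
    fix c assume "c \<in> insert (ones n) ?G"
    then show "c \<in> {c\<in>C. \<forall>i\<in>S. c i = 1}"
      using ones_in_code S unfolding ones_def supp_def by auto
  qed
  moreover have "ones n \<notin> ?G"
    using wt_ones n_eq_2u u_pos by auto
  ultimately show ?thesis
    using finite_code by (simp add: card_blocks)
qed

lemma card_blocks_containing:
  assumes "S \<subseteq> {0..<n}" "S \<noteq> {}" "card S \<le> t"
  shows "(card {b\<in>blocks. S \<subseteq> b} + 1) * 2 ^ card S = card C"
  using card_blocks_containing_add_one[OF assms(1,2)] card_agreeing[OF assms(1,3)] by simp

lemma blocks_is_design: "is_design {0..<n} u blocks t"
  unfolding is_design_def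
proof (intro conjI exI allI impI ballI)
  fix S assume S: "S \<subseteq> {0..<n} \<and> card S = t"
  moreover have "S \<noteq> {}"
    using S t_pos by auto
  ultimately have "(card {b\<in>blocks. S \<subseteq> b} + 1) * 2 ^ t = card C"
    using card_blocks_containing[of S] by simp
  then show "card {b\<in>blocks. S \<subseteq> b} = card C div 2 ^ t - 1"
    by (rule eq_div_power_minus_one)
qed (use t_le_u blocks_subset in auto)

lemma not_2_design_if_t_eq_1:
  assumes t1: "t = 1" and D: "is_design {0..<n} u blocks 2"
  shows False
proof -
  obtain L where L: "\<And>S. S \<subseteq> {0..<n} \<Longrightarrow> card S = 2 \<Longrightarrow> card {b\<in>blocks. S \<subseteq> b} = L"
    using D unfolding is_design_def by auto
  obtain y where y: "y \<in> dual_code n C" "wt n y = t + 1"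
    by (rule obtain_dual_word)
  then obtain a a' where aa': "supp n y = {a, a'}" "a \<noteq> a'"
    using t1 unfolding wt_def by (metis card_2_iff one_add_one)
  have a: "a \<in> {0..<n}" "a' \<in> {0..<n}"
    using aa'(1) supp_subset[of n y] by auto
  have "a \<in> b \<longleftrightarrow> a' \<in> b" if b: "b \<in> blocks" for b
  proof -
    obtain c where c: "c \<in> C" "wt n c = u" "b = supp n c"
      using b by (rule blocksE)
    then have "inner n c y = 0"
      using y(1) unfolding dual_code_def by auto
    then have "even (card (b \<inter> {a, a'}))"
      by (simp add: inner_eq_of_nat_card of_nat_eq_0_iff_even_bit c(3) aa'(1))
    then show ?thesis
      using aa'(2) by (cases "a \<in> b"; cases "a' \<in> b") (auto simp: Int_insert_right)
  qed
  then have "{b\<in>blocks. {a} \<subseteq> b} = {b\<in>blocks. {a, a'} \<subseteq> b}"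
    by auto
  then have lambda_a: "card {b\<in>blocks. {a} \<subseteq> b} = L"
    using L[of "{a, a'}"] a aa'(2) by simp
  have "card {b\<in>blocks. insert x {a} \<subseteq> b} = L" if "x \<in> {0..<n} - {a}" for x
    using that a by (intro L) auto
  then have "card {b\<in>blocks. {a} \<subseteq> b} * (u - 1) = (n - 1) * L"
    using card_blocks_containing_derived[of "{0..<n}" blocks u "{a}" L] blocks_subset a by simp
  then have "L = 0"
    using lambda_a n_eq_2u u_pos by (auto simp: mult.commute)
  obtain c0 where c0: "c0 \<in> C" "wt n c0 = u"
    using weight_u_codeword by blast
  then obtain x where x: "x \<in> supp n c0"
    using u_pos unfolding wt_def by (metis card.empty ex_in_conv less_irrefl)
  have "card {b\<in>blocks. {x} \<subseteq> b} \<noteq> 0"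
    using card_blocks_containing_neq_0[OF c0, of "{x}"] x by simp
  moreover have "card {b\<in>blocks. {x} \<subseteq> b} = card {b\<in>blocks. {a} \<subseteq> b}"
    using card_blocks_containing_eq[of "{x}" "{a}"] x a supp_subset[of n c0] t_pos by auto
  ultimately show False
    using lambda_a \<open>L = 0\<close> by simp
qed

lemma not_4_design:
  assumes t3: "3 \<le> t" and D: "is_design {0..<n} u blocks 4"
  shows False
proof -
  have u4: "4 \<le> u"
    using D unfolding is_design_def by simp
  obtain L where L: "\<And>S. S \<subseteq> {0..<n} \<Longrightarrow> card S = 4 \<Longrightarrow> card {b\<in>blocks. S \<subseteq> b} = L"
    using D unfolding is_design_def by auto
  define T where "T = {0, 1, 2::nat}"
  have T: "T \<subseteq> {0..<n}" "card T = 3" "T \<noteq> {}"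
    using n_eq_2u u4 unfolding T_def by auto
  define m where "m = card {b\<in>blocks. T \<subseteq> b} + 1"
  have card_C: "card C = 8 * m"
    using card_blocks_containing[OF T(1,3)] T(2) t3 unfolding m_def by simp
  have "(card {b\<in>blocks. {0} \<subseteq> b} + 1) * 2 = card C"
    using card_blocks_containing[of "{0}"] n_eq_2u u4 t3 by simp
  then have lambda1: "card {b\<in>blocks. {0} \<subseteq> b} = 4 * m - 1"
    using card_C by simp
  have lambda2: "card {b\<in>blocks. insert x {0} \<subseteq> b} = 2 * m - 1" if x: "x \<in> {0..<n} - {0}" for x
  proof -
    have "(card {b\<in>blocks. insert x {0} \<subseteq> b} + 1) * 2 ^ 2 = card C"
      using card_blocks_containing[of "insert x {0}"] x n_eq_2u u4 t3 by simp
    then show ?thesis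
      using card_C by simp
  qed
  have "card {b\<in>blocks. {0} \<subseteq> b} * (u - 1) = (n - 1) * (2 * m - 1)"
    using card_blocks_containing_derived[of "{0..<n}" blocks u "{0}"] blocks_subset lambda2 n_eq_2u u4
    by simp
  then have at_point: "(4 * m - 1) * (u - 1) = (2 * u - 1) * (2 * m - 1)"
    using lambda1 n_eq_2u by simp
  have "card {b\<in>blocks. insert x T \<subseteq> b} = L" if "x \<in> {0..<n} - T" for x
    using that T by (intro L) (auto simp: T_def)
  then have "card {b\<in>blocks. T \<subseteq> b} * (u - 3) = (n - 3) * L"
    using card_blocks_containing_derived[of "{0..<n}" blocks u T L] blocks_subset T by simp
  then have at_triple: "(m - 1) * (u - 3) = (2 * u - 3) * L"
    using n_eq_2u unfolding m_def by simp
  show False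
    using four_design_equations_unsolvable[OF u4 _ at_point at_triple] unfolding m_def by simp
qed

lemma Max_design_strength: "Max {s. 1 \<le> s \<and> is_design {0..<n} u blocks s} = (if t = 1 then 1 else 3)"
proof -
  let ?S = "{s. 1 \<le> s \<and> is_design {0..<n} u blocks s}"
  have finite: "finite ?S"
    by (rule finite_subset[of _ "{..u}"]) (auto simp: is_design_def)
  have design_le_t: "s \<in> ?S" if "1 \<le> s" "s \<le> t" for s
    using that is_design_mono[OF blocks_is_design finite_atLeastLessThan] by simp
  have design_mono: "is_design {0..<n} u blocks s'" if "s \<in> ?S" "s' \<le> s" for s s'
    using that is_design_mono[OF _ finite_atLeastLessThan] by blast
  show ?thesis
  proof (cases "t = 1")
    case True
    have "s \<le> 1" if "s \<in> ?S" for s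
      using not_2_design_if_t_eq_1[OF True] design_mono[OF that, of 2] by fastforce
    then show ?thesis
      using True design_le_t[of 1] by (intro Max_eqI[OF finite]) auto
  next
    case False
    then have "3 \<le> t"
      using odd_t t_pos by presburger
    moreover have "s \<le> 3" if "s \<in> ?S" for s
      using not_4_design[OF \<open>3 \<le> t\<close>] design_mono[OF that, of 4] by fastforce
    ultimately show ?thesis
      using False design_le_t[of 3] by (intro Max_eqI[OF finite]) auto
  qed
qed

end

theorem lemma3p1:
  fixes n t dd :: nat and C :: "(nat \<Rightarrow> bit) set"
  assumes "binary_linear_code n C"
    and "ones n \<in> C"
    and "is_min_distance n (dual_code n C) dd"
    and "t > 0"
    and "int dd - int t = 1"
    and "card {u. code_weight_class n C u \<noteq> {} \<and> 0 < u \<and> int u \<le> int n - int t} = 1"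
  shows "is_design {0..<n} (n div 2) (support_design n C (n div 2)) 1 \<and>
         Max {s. 1 \<le> s \<and> is_design {0..<n} (n div 2) (support_design n C (n div 2)) s} \<in> {1, 3}"
proof -
  obtain u where u: "{u. code_weight_class n C u \<noteq> {} \<and> 0 < u \<and> int u \<le> int n - int t} = {u}"
    using assms(6) by (rule card_1_singletonE)
  have "dd = t + 1"
    using assms(5) by simp
  interpret code_with_one_low_weight n t u C
    using assms u \<open>dd = t + 1\<close> by unfold_locales auto
  have "n div 2 = u"
    using n_eq_2u by simp
  then show ?thesis
    using is_design_mono[OF blocks_is_design finite_atLeastLessThan, of 1] t_pos Max_design_strength
    by simp
qed

end
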